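(* The fine time-grid propagators $\Psi_j=(M_s+\tau_j Q_s)^{-1}M_s$, $j=1,\dots,N$, and the coarse time-grid propagators $\Phi_k=(M_s+\tilde{\tau}_k Q_s)^{-1}M_s$, $k=1,\dots,N_c$, are both strongly stable, i.e. their discrete $l^2$-norms satisfy $\|\Psi_j\|<1$ and $\|\Phi_k\|<1$.
   Context: Setting: the unsteady fractional Laplacian problem $\partial_t u=-(-\Delta)^{\alpha/2}u+f$ on a bounded Lipschitz domain $\Omega\subset\mathbb{R}^d$ with $\alpha\in(0,2)$ is reformulated via the Caffarelli–Silvestre extension on the truncated cylinder $\Omega\times(0,\mathcal{Z})$ with weight $z^\beta$, $\beta=1-\alpha$, and discretized by tensor-product $\mathcal{P}_1\otimes\mathcal{P}_1$ finite elements (spatial basis $\phi_i$, $i=1,\dots,n$; extended-direction basis $\psi_j$, $j=1,\dots,M-1$) and backward Euler in time on a (possibly nonuniform) mesh $0=t_0<\dots<t_N=T$ with steps $\tau_j=t_j-t_{j-1}$. The matrices are $M_s=(\frac{1}{d_\alpha}\int_\Omega\phi_i\phi_q)$, $A_s=(\frac{1}{d_\alpha}\int_\Omega\nabla\phi_i\cdot\nabla\phi_q)$, $M_z=(\int_0^{\mathcal{Z}}z^\beta\psi_j\psi_l)$, $A_z=(\int_0^{\mathcal{Z}}z^\beta\psi_j'\psi_l')$, with $d_\alpha>0$ a normalization constant. Eliminating the auxiliary (non-trace) unknowns gives the time-stepping $(M_s+\tau_{k+1}Q_s)\mathcal{U}_{k+1}=M_s\mathcal{U}_k+\tau_{k+1}\mathcal{F}_{k+1}$,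 where $Q_s$ is the Schur complement $Q_s=(m^z_{11}A_s+a^z_{11}M_s)-(\tilde m_z\otimes A_s+\tilde a_z\otimes M_s)(\tilde M_z\otimes A_s+\tilde A_z\otimes M_s)^{-1}(\tilde m_z^T\otimes A_s+\tilde a_z^T\otimes M_s)$, with $\tilde m_z,\tilde a_z$ the first rows of $M_z,A_z$ without the first entry and $\tilde M_z,\tilde A_z$ the trailing principal submatrices (indices $2,\dots,M-1$); $M_s$ and $M_s^{-1/2}Q_sM_s^{-1/2}$ are SPD. For a coarsening factor $m$, the coarse time grid is $\tilde t_i=t_{mi}$, $i=0,\dots,N_c=N/m$, with steps $\tilde\tau_k=\tilde t_k-\tilde t_{k-1}$. *)

theory Defs
  imports "HOL-Analysis.Analysis"
begin

definition spd :: "real^'n^'n \<Rightarrow> bool" where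
  "spd A \<longleftrightarrow> transpose A = A \<and> (\<forall>x::real^'n. x \<noteq> 0 \<longrightarrow> x \<bullet> (A *v x) > 0)"

text \<open>Discrete l2 (mass-matrix weighted) norm of a coefficient vector: sqrt(x^T M x).\<close>
definition Mnorm :: "real^'n^'n \<Rightarrow> real^'n \<Rightarrow> real" where
  "Mnorm M x = sqrt (x \<bullet> (M *v x))"

definition Mopnorm :: "real^'n^'n \<Rightarrow> real^'n^'n \<Rightarrow> real" where
  "Mopnorm M A = (SUP x\<in>{x::real^'n. x \<noteq> 0}. Mnorm M (A *v x) / Mnorm M x)"

definition propagator :: "real^'n^'n \<Rightarrow> real^'n^'n \<Rightarrow> real \<Rightarrow> real^'n^'n" where
  "propagator M Q tau = matrix_inv (M + tau *\<^sub>R Q) ** M"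

end

theory Submission
  imports Defs
begin

text \<open>Let \<open>H\<close> be the SPD square root of \<open>M\<close>. Then \<open>Mnorm M x = norm (H x)\<close>, and with
  \<open>B = H\<inverse> Q H\<inverse>\<close> we have \<open>Q = H B H\<close>, so \<open>y = (M + \<tau> Q)\<inverse> M x\<close> satisfies the energy identity
  \<open>\<parallel>H y\<parallel>\<^sup>2 + \<tau> (H y) \<bullet> B (H y) = (H y) \<bullet> (H x)\<close>. If \<open>c > 0\<close> bounds the Rayleigh quotient of the SPD
  matrix \<open>B\<close> from below, Cauchy-Schwarz gives \<open>(1 + \<tau> c) \<parallel>H y\<parallel> \<le> \<parallel>H x\<parallel>\<close>, so every backward Euler
  propagator with a positive step is a strict contraction in the \<open>M\<close>-norm. The fine and the coarse
  steps are positive because the time grid is strictly increasing.\<close>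

lemma matrix_inv_inverse:
  fixes A :: "'a::field^'n^'n"
  assumes "invertible A"
  shows "A ** matrix_inv A = mat 1" and "matrix_inv A ** A = mat 1"
proof -
  have "\<exists>A'. A ** A' = mat 1 \<and> A' ** A = mat 1"
    using assms by (simp add: invertible_def)
  then have "A ** matrix_inv A = mat 1 \<and> matrix_inv A ** A = mat 1"
    unfolding matrix_inv_def by (rule someI_ex)
  then show "A ** matrix_inv A = mat 1" and "matrix_inv A ** A = mat 1" by simp_all
qed

lemma invertible_iff_ker_zero:
  fixes A :: "'a::field^'n^'n"
  shows "invertible A \<longleftrightarrow> (\<forall>x. A *v x = 0 \<longrightarrow> x = 0)"
  by (simp add: invertible_left_inverse matrix_left_invertible_ker)

lemma spd_invertible: "spd A \<Longrightarrow> invertible A"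
  unfolding invertible_iff_ker_zero spd_def by force

lemma inner_symmetric_matrix:
  fixes H :: "real^'n^'n"
  assumes "transpose H = H"
  shows "x \<bullet> (H *v y) = (H *v x) \<bullet> y"
  by (metis assms dot_lmul_matrix transpose_matrix_vector)

lemma inner_square_matrix:
  fixes H :: "real^'n^'n"
  assumes "transpose H = H"
  shows "y \<bullet> ((H ** H) *v x) = (H *v y) \<bullet> (H *v x)"
  by (simp add: inner_symmetric_matrix[OF assms] matrix_vector_mul_assoc[symmetric])

lemma Mnorm_square_matrix:
  fixes H :: "real^'n^'n"
  assumes "transpose H = H"
  shows "Mnorm (H ** H) x = norm (H *v x)"
  by (simp add: Mnorm_def inner_square_matrix[OF assms] norm_eq_sqrt_inner)

lemma spd_coercive:
  fixes B :: "real^'n^'n"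
  assumes "spd B"
  obtains c where "c > 0" and "\<And>z. c * (z \<bullet> z) \<le> z \<bullet> (B *v z)"
proof -
  have "continuous_on (sphere 0 1) (\<lambda>z::real^'n. z \<bullet> (B *v z))"
    by (intro continuous_intros)
  then obtain u :: "real^'n" where u: "u \<in> sphere 0 1"
    and u_min: "\<And>z. z \<in> sphere 0 1 \<Longrightarrow> u \<bullet> (B *v u) \<le> z \<bullet> (B *v z)"
    using continuous_attains_inf[of "sphere (0::real^'n) 1" "\<lambda>z. z \<bullet> (B *v z)"]
    by (auto simp: sphere_eq_empty)
  have "u \<noteq> 0"
    using u by auto
  then have "u \<bullet> (B *v u) > 0"
    using assms by (simp add: spd_def)
  moreover have "u \<bullet> (B *v u) * (z \<bullet> z) \<le> z \<bullet> (B *v z)" for z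
  proof (cases "z = 0")
    case False
    define w where "w = (1 / norm z) *\<^sub>R z"
    have z_eq: "z = norm z *\<^sub>R w"
      using False by (simp add: w_def)
    have "u \<bullet> (B *v u) \<le> w \<bullet> (B *v w)"
      using False by (intro u_min) (simp add: w_def)
    then have "u \<bullet> (B *v u) * (norm z)\<^sup>2 \<le> w \<bullet> (B *v w) * (norm z)\<^sup>2"
      by (rule mult_right_mono) simp
    also have "\<dots> = z \<bullet> (B *v z)"
      by (subst (2 3) z_eq) (simp add: matrix_vector_mult_scaleR power2_eq_square mult.commute)
    finally show ?thesis
      by (simp add: power2_norm_eq_inner)
  qed simp
  ultimately show thesis by (rule that)
qed

lemma Mopnorm_le:
  fixes M A :: "real^'n^'n"
  assumes M_psd: "\<And>x. x \<bullet> (M *v x) \<ge> 0"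
    and "r \<ge> 0" and "\<And>x. x \<noteq> 0 \<Longrightarrow> Mnorm M (A *v x) \<le> r * Mnorm M x"
  shows "Mopnorm M A \<le> r"
  unfolding Mopnorm_def
proof (rule cSUP_least)
  show "{x::real^'n. x \<noteq> 0} \<noteq> {}" by auto
  fix x :: "real^'n"
  assume "x \<in> {x. x \<noteq> 0}"
  moreover have "Mnorm M x \<ge> 0"
    using M_psd by (simp add: Mnorm_def)
  ultimately show "Mnorm M (A *v x) / Mnorm M x \<le> r"
    using assms by (cases "Mnorm M x = 0") (auto simp: divide_le_eq mult.commute)
qed

lemma backward_euler_energy:
  fixes H B :: "real^'n^'n"
  assumes H_sym: "transpose H = H"
    and B_coercive: "\<And>z. c * (z \<bullet> z) \<le> z \<bullet> (B *v z)" and "\<tau> \<ge> 0"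
  shows "(1 + \<tau> * c) * (norm (H *v y))\<^sup>2 \<le> y \<bullet> ((H ** H + \<tau> *\<^sub>R (H ** B ** H)) *v y)"
proof -
  have "y \<bullet> ((H ** B ** H) *v y) = (H *v y) \<bullet> (B *v (H *v y))"
    by (simp add: inner_symmetric_matrix[OF H_sym] matrix_vector_mul_assoc[symmetric])
  then have "y \<bullet> ((H ** H + \<tau> *\<^sub>R (H ** B ** H)) *v y)
      = (norm (H *v y))\<^sup>2 + \<tau> * ((H *v y) \<bullet> (B *v (H *v y)))"
    by (simp add: matrix_vector_mult_add_rdistrib scaleR_matrix_vector_assoc[symmetric]
        inner_add_right inner_square_matrix[OF H_sym] power2_norm_eq_inner)
  moreover have "\<tau> * (c * (norm (H *v y))\<^sup>2) \<le> \<tau> * ((H *v y) \<bullet> (B *v (H *v y)))"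
    using B_coercive[of "H *v y"] \<open>\<tau> \<ge> 0\<close> by (simp add: mult_left_mono power2_norm_eq_inner)
  ultimately show ?thesis
    by (simp add: algebra_simps)
qed

lemma propagator_contracts:
  fixes H B :: "real^'n^'n"
  assumes H_sym: "transpose H = H" and H_inv: "invertible H"
    and B_coercive: "\<And>z. c * (z \<bullet> z) \<le> z \<bullet> (B *v z)" and "c \<ge> 0" and "\<tau> \<ge> 0"
  defines "M \<equiv> H ** H" and "Q \<equiv> H ** B ** H"
  shows "(1 + \<tau> * c) * Mnorm M (propagator M Q \<tau> *v x) \<le> Mnorm M x"
proof -
  define P where "P = M + \<tau> *\<^sub>R Q"
  define y where "y = propagator M Q \<tau> *v x"
  have energy: "(1 + \<tau> * c) * (norm (H *v z))\<^sup>2 \<le> z \<bullet> (P *v z)" for z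
    unfolding P_def M_def Q_def using backward_euler_energy[OF H_sym B_coercive \<open>\<tau> \<ge> 0\<close>] .
  have "1 + \<tau> * c > 0"
    using \<open>c \<ge> 0\<close> \<open>\<tau> \<ge> 0\<close> by (simp add: add_pos_nonneg)
  have "invertible P"
    unfolding invertible_iff_ker_zero
  proof (intro allI impI)
    fix z assume "P *v z = 0"
    then have "(1 + \<tau> * c) * (norm (H *v z))\<^sup>2 \<le> 0"
      using energy[of z] by simp
    then have "H *v z = 0"
      using \<open>1 + \<tau> * c > 0\<close> by (simp add: mult_le_0_iff)
    then show "z = 0"
      using H_inv by (simp add: invertible_iff_ker_zero)
  qed
  have "P *v y = (P ** matrix_inv P ** M) *v x"
    by (simp add: y_def propagator_def P_def[symmetric] matrix_vector_mul_assoc matrix_mul_assoc)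
  then have "P *v y = M *v x"
    using \<open>invertible P\<close> by (simp add: matrix_inv_inverse matrix_mul_lid)
  then have "(1 + \<tau> * c) * (norm (H *v y))\<^sup>2 \<le> (H *v y) \<bullet> (H *v x)"
    using energy[of y] by (simp add: M_def inner_square_matrix[OF H_sym])
  also have "\<dots> \<le> norm (H *v y) * norm (H *v x)"
    by (rule norm_cauchy_schwarz)
  finally have "(1 + \<tau> * c) * norm (H *v y) \<le> norm (H *v x)"
    by (cases "H *v y = 0") (simp_all add: power2_eq_square)
  then show ?thesis
    by (simp add: y_def M_def Mnorm_square_matrix[OF H_sym])
qed

lemma Mopnorm_propagator_less_1:
  fixes M Q H :: "real^'n^'n"
  assumes H_spd: "spd H" and H_sq: "H ** H = M"
    and B_spd: "spd (matrix_inv H ** Q ** matrix_inv H)" and "\<tau> > 0"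
  shows "Mopnorm M (propagator M Q \<tau>) < 1"
proof -
  define B where "B = matrix_inv H ** Q ** matrix_inv H"
  obtain c where "c > 0" and B_coercive: "\<And>z. c * (z \<bullet> z) \<le> z \<bullet> (B *v z)"
    using spd_coercive B_spd unfolding B_def by blast
  have H_sym: "transpose H = H" and H_inv: "invertible H"
    using H_spd spd_invertible by (auto simp: spd_def)
  have Q_eq: "Q = H ** B ** H"
    by (simp add: B_def matrix_mul_assoc matrix_inv_inverse[OF H_inv] matrix_mul_lid)
      (simp add: matrix_mul_assoc[symmetric] matrix_inv_inverse[OF H_inv] matrix_mul_rid)
  have "1 + \<tau> * c > 1"
    using \<open>c > 0\<close> \<open>\<tau> > 0\<close> by simp
  have "Mopnorm M (propagator M Q \<tau>) \<le> 1 / (1 + \<tau> * c)"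
  proof (rule Mopnorm_le)
    show "x \<bullet> (M *v x) \<ge> 0" for x
      by (simp add: H_sq[symmetric] inner_square_matrix[OF H_sym])
  next
    fix x :: "real^'n"
    have "(1 + \<tau> * c) * Mnorm M (propagator M Q \<tau> *v x) \<le> Mnorm M x"
      using propagator_contracts[OF H_sym H_inv B_coercive] \<open>c > 0\<close> \<open>\<tau> > 0\<close>
      by (simp add: H_sq Q_eq)
    then show "Mnorm M (propagator M Q \<tau> *v x) \<le> 1 / (1 + \<tau> * c) * Mnorm M x"
      using \<open>1 + \<tau> * c > 1\<close> by (simp add: field_simps)
  qed (use \<open>1 + \<tau> * c > 1\<close> in simp)
  also have "\<dots> < 1"
    using \<open>1 + \<tau> * c > 1\<close> by simp
  finally show ?thesis .
qed

theorem theorem2: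
  fixes Ms Qs Ms_half :: "real^'n^'n"
    and t :: "nat \<Rightarrow> real" and T :: real and N m :: nat
  assumes Ms_spd: "spd Ms"
    and half_spd: "spd Ms_half" and half_sq: "Ms_half ** Ms_half = Ms"
    and Q_spd: "spd (matrix_inv Ms_half ** Qs ** matrix_inv Ms_half)"
    and t0: "t 0 = 0" and tN: "t N = T"
    and t_mono: "\<And>j. j < N \<Longrightarrow> t j < t (Suc j)"
    and m_pos: "m \<ge> 1" and m_dvd: "m dvd N"
  shows "(\<forall>j \<in> {1..N}. Mopnorm Ms (propagator Ms Qs (t j - t (j - 1))) < 1)
       \<and> (\<forall>k \<in> {1..N div m}. Mopnorm Ms (propagator Ms Qs (t (m * k) - t (m * (k - 1)))) < 1)"
proof -
  \<comment> \<open>\<open>Ms_spd\<close> is implied by \<open>half_spd\<close> and \<open>half_sq\<close>.\<close>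
  have stable: "Mopnorm Ms (propagator Ms Qs (t b - t a)) < 1" if "a < b" "b \<le> N" for a b
  proof -
    have "t a < t b"
    proof (rule lift_Suc_mono_less_ivl[of "{..<N}" t a b])
      show "{a..<b} \<subseteq> {..<N}"
        using \<open>b \<le> N\<close> by auto
    qed (use t_mono \<open>a < b\<close> in auto)
    then show ?thesis
      using Mopnorm_propagator_less_1[OF half_spd half_sq Q_spd] by simp
  qed
  have "m * k \<le> N" if "k \<le> N div m" for k
    using that m_dvd by (metis dvd_mult_div_cancel mult_le_mono2)
  then show ?thesis
    using m_pos by (auto intro!: stable)
qed

end
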